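(* Let $G$ be a connected graph and $I\subseteq V(G)$ a pre-cycle core of $G$. Then for any $y,z\in I$, every non-backtracking path in $G$ between $y$ and $z$ is contained in the induced subgraph $G|_I$.
   Context: Graphs are simple and unoriented, possibly infinite. A cycle in $G$ is a closed path $(x_0,\dots,x_n=x_0)$ with no repeated vertices except $x_0=x_n$ and no edges $(x_i,x_j)$ of $G$ with $i-j\not\equiv0,\pm1\pmod n$. A pre-cycle core of $G$ is a subset $I\subseteq V(G)$ such that $G|_I$ is connected and contains all cycles of $G$. A path is non-backtracking if it never traverses an edge and immediately returns along it. *)

theory Defs
  imports Main
begin

definition simple_graph :: "'a set \<Rightarrow> ('a \<Rightarrow> 'a \<Rightarrow> bool) \<Rightarrow> bool" where
  "simple_graph V E \<longleftrightarrow>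
     (\<forall>x y. E x y \<longrightarrow> x \<in> V \<and> y \<in> V) \<and>
     (\<forall>x y. E x y \<longrightarrow> E y x) \<and> (\<forall>x. \<not> E x x)"

definition is_path :: "'a set \<Rightarrow> ('a \<Rightarrow> 'a \<Rightarrow> bool) \<Rightarrow> 'a list \<Rightarrow> bool" where
  "is_path V E xs \<longleftrightarrow> xs \<noteq> [] \<and> set xs \<subseteq> V \<and>
     (\<forall>i. Suc i < length xs \<longrightarrow> E (xs ! i) (xs ! Suc i))"

definition non_backtracking :: "'a list \<Rightarrow> bool" where
  "non_backtracking xs \<longleftrightarrow> (\<forall>i. i + 2 < length xs \<longrightarrow> xs ! (i + 2) \<noteq> xs ! i)"

definition connected_on :: "('a \<Rightarrow> 'a \<Rightarrow> bool) \<Rightarrow> 'a set \<Rightarrow> bool" where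
  "connected_on E S \<longleftrightarrow> S \<noteq> {} \<and>
     (\<forall>x\<in>S. \<forall>y\<in>S. \<exists>xs. is_path S E xs \<and> hd xs = x \<and> last xs = y)"

text \<open>A cycle (x_0,...,x_{n-1},x_n=x_0), given by the list [x_0,...,x_{n-1}], n \<ge> 3,
  distinct vertices, cyclically consecutive vertices adjacent, and no chords.\<close>
definition is_cycle :: "'a set \<Rightarrow> ('a \<Rightarrow> 'a \<Rightarrow> bool) \<Rightarrow> 'a list \<Rightarrow> bool" where
  "is_cycle V E cs \<longleftrightarrow> 3 \<le> length cs \<and> distinct cs \<and> set cs \<subseteq> V \<and>
     (\<forall>i < length cs. E (cs ! i) (cs ! ((i + 1) mod length cs))) \<and>
     (\<forall>i < length cs. \<forall>j < length cs. E (cs ! i) (cs ! j) \<longrightarrow>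
        j = (i + 1) mod length cs \<or> i = (j + 1) mod length cs)"

definition pre_cycle_core :: "'a set \<Rightarrow> ('a \<Rightarrow> 'a \<Rightarrow> bool) \<Rightarrow> 'a set \<Rightarrow> bool" where
  "pre_cycle_core V E I \<longleftrightarrow> I \<subseteq> V \<and> connected_on E I \<and>
     (\<forall>cs. is_cycle V E cs \<longrightarrow> set cs \<subseteq> I)"

end

theory Submission
  imports Defs
begin

text \<open>Suppose a non-backtracking walk between two vertices of \<open>I\<close> leaves \<open>I\<close>. Cut out an
  excursion \<open>a, m, b\<close> with \<open>a, b \<in> I\<close> and \<open>m\<close> disjoint from \<open>I\<close>. If the excursion repeats a
  vertex, the innermost repetition is a non-backtracking closed walk without further repetitions,
  i.e. a cycle; having at least three vertices, it meets \<open>m\<close>. Otherwise, closing the excursion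
  with a simple path from \<open>b\<close> back to \<open>a\<close> inside the connected set \<open>I\<close> gives a cycle through
  \<open>m\<close>. Shortcutting chords turns a cycle into a chordless one through any prescribed vertex, and
  the pre-cycle core contains all chordless cycles: so a vertex of \<open>m\<close> lies in \<open>I\<close>.\<close>

lemma is_path_iff_successively:
  "is_path V E xs \<longleftrightarrow> xs \<noteq> [] \<and> set xs \<subseteq> V \<and> successively E xs"
  by (auto simp: is_path_def successively_conv_nth)

lemma non_backtracking_infix:
  assumes "non_backtracking (p @ s @ r)"
  shows "non_backtracking s"
  unfolding non_backtracking_def
proof (intro allI impI)
  fix i assume "i + 2 < length s"
  then show "s ! (i + 2) \<noteq> s ! i"
    using assms[unfolded non_backtracking_def, rule_format, of "length p + i"]
    by (simp add: nth_append add.assoc)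
qed

lemma successively_infix:
  "successively E (p @ s @ r) \<Longrightarrow> successively E s"
  by (simp add: successively_append_iff)

text \<open>Unlike \<^const>\<open>is_cycle\<close>, a simple cycle may have chords.\<close>
definition simple_cycle :: "('a \<Rightarrow> 'a \<Rightarrow> bool) \<Rightarrow> 'a list \<Rightarrow> bool" where
  "simple_cycle E cs \<longleftrightarrow>
     3 \<le> length cs \<and> distinct cs \<and> successively E cs \<and> E (last cs) (hd cs)"

lemma simple_cycle_rotate:
  assumes "simple_cycle E (xs @ ys)" and "ys \<noteq> []"
  shows "simple_cycle E (ys @ xs)"
proof (cases "xs = []")
  case False
  have "successively E xs" "successively E ys" "E (last xs) (hd ys)" "E (last ys) (hd xs)"
    using assms False by (auto simp: simple_cycle_def successively_append_iff)
  then show ?thesis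
    using assms False by (auto simp: simple_cycle_def successively_append_iff)
qed (use assms in simp)

lemma simple_cycle_adjacent_mod:
  assumes "simple_cycle E cs" and "i < length cs"
  shows "E (cs ! i) (cs ! ((i + 1) mod length cs))"
proof (cases "Suc i < length cs")
  case True
  then show ?thesis using assms by (simp add: simple_cycle_def successively_conv_nth)
next
  case False
  then have "Suc i = length cs" using assms(2) by simp
  then have "i = length cs - 1" "(i + 1) mod length cs = 0" by auto
  moreover have "cs \<noteq> []" using assms(2) by auto
  ultimately show ?thesis
    using assms(1) by (simp add: simple_cycle_def last_conv_nth hd_conv_nth)
qed

lemma simple_cycle_chord:
  assumes "simple_graph V E" and "simple_cycle E cs" and "set cs \<subseteq> V"
    and "\<not> is_cycle V E cs"
  obtains i j where "E (cs ! i) (cs ! j)" "i + 1 < j" "j < length cs"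
    "0 < i \<or> j + 1 < length cs"
proof -
  let ?n = "length cs"
  have sym: "\<And>x y. E x y \<Longrightarrow> E y x" and irrefl: "\<And>x. \<not> E x x"
    using assms(1) by (auto simp: simple_graph_def)
  obtain i j where ij: "i < ?n" "j < ?n" "E (cs ! i) (cs ! j)"
    "j \<noteq> (i + 1) mod ?n" "i \<noteq> (j + 1) mod ?n"
    using assms simple_cycle_adjacent_mod[OF assms(2)]
    by (auto simp: is_cycle_def simple_cycle_def)
  have ordered: "E (cs ! i') (cs ! j') \<and> i' + 1 < j' \<and> j' < ?n \<and> (0 < i' \<or> j' + 1 < ?n)"
    if "i' < j'" "j' < ?n" "E (cs ! i') (cs ! j')"
      "j' \<noteq> (i' + 1) mod ?n" "i' \<noteq> (j' + 1) mod ?n" for i' j'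
    using that by (cases "j' + 1 = ?n") auto
  have "i \<noteq> j" using ij(3) irrefl by auto
  then consider "i < j" | "j < i" by linarith
  then show ?thesis
    using ordered[of i j] ordered[of j i] ij sym that by cases blast+
qed

lemma simple_cycle_shortcut:
  assumes "simple_cycle E cs" and "E (cs ! i) (cs ! j)" and "i + 1 < j" and "j < length cs"
    and "0 < i \<or> j + 1 < length cs"
  shows "simple_cycle E (take (Suc i) cs @ drop j cs)"
proof -
  have "distinct cs" "successively E cs" "E (last cs) (hd cs)"
    using assms(1) by (auto simp: simple_cycle_def)
  moreover have "set (take (Suc i) cs) \<inter> set (drop j cs) = {}"
    using set_take_disj_set_drop_if_distinct[OF \<open>distinct cs\<close>] assms(3) by auto
  moreover have "successively E (take (Suc i) cs)" "successively E (drop j cs)"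
    using successively_append_iff \<open>successively E cs\<close> append_take_drop_id by metis+
  moreover have "last (take (Suc i) cs) = cs ! i"
    using assms(3,4) by (subst last_conv_nth) auto
  moreover have "hd (drop j cs) = cs ! j"
    using assms(4) by (simp add: hd_drop_conv_nth)
  moreover have "hd (take (Suc i) cs @ drop j cs) = hd cs"
    and "last (take (Suc i) cs @ drop j cs) = last cs"
    using assms(3,4) by (simp_all add: hd_append)
  ultimately show ?thesis
    using assms by (auto simp: simple_cycle_def successively_append_iff)
qed

lemma simple_cycle_is_cycle_through_hd:
  assumes "simple_graph V E"
  shows "simple_cycle E cs \<Longrightarrow> set cs \<subseteq> V \<Longrightarrow> \<exists>c. is_cycle V E c \<and> hd c = hd cs"
proof (induction "length cs" arbitrary: cs rule: less_induct)
  case less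
  show ?case
  proof (cases "is_cycle V E cs")
    case False
    then obtain i j where chord: "E (cs ! i) (cs ! j)" "i + 1 < j" "j < length cs"
      "0 < i \<or> j + 1 < length cs"
      using simple_cycle_chord[OF assms less.prems] by blast
    let ?cs' = "take (Suc i) cs @ drop j cs"
    have "simple_cycle E ?cs'" using simple_cycle_shortcut[OF less.prems(1) chord] .
    moreover have "set ?cs' \<subseteq> V"
      using less.prems(2) set_take_subset[of "Suc i" cs] set_drop_subset[of j cs] by auto
    moreover have "length ?cs' < length cs" using chord by simp
    moreover have "hd ?cs' = hd cs" using chord by (simp add: hd_append)
    ultimately show ?thesis using less.hyps by metis
  qed blast
qed

lemma simple_cycle_is_cycle_through:
  assumes "simple_graph V E" and "simple_cycle E cs" and "set cs \<subseteq> V" and "v \<in> set cs"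
  shows "\<exists>c. is_cycle V E c \<and> v \<in> set c"
proof -
  obtain xs ys where cs: "cs = xs @ v # ys" using assms(4) by (meson split_list)
  then have "simple_cycle E (v # ys @ xs)" "set (v # ys @ xs) \<subseteq> V"
    using simple_cycle_rotate[of E xs "v # ys"] assms(2,3) by auto
  then obtain c where "is_cycle V E c" "hd c = v"
    using simple_cycle_is_cycle_through_hd[OF assms(1)] by fastforce
  moreover have "c \<noteq> []" using \<open>is_cycle V E c\<close> by (auto simp: is_cycle_def)
  ultimately show ?thesis by auto
qed

lemma pre_cycle_core_contains_simple_cycles:
  assumes "simple_graph V E" and "pre_cycle_core V E I" and "simple_cycle E cs" and "set cs \<subseteq> V"
  shows "set cs \<subseteq> I"
  using simple_cycle_is_cycle_through[OF assms(1,3,4)] assms(2)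
  by (auto simp: pre_cycle_core_def)

lemma non_backtracking_closed_walk_simple_cycle:
  assumes "simple_graph V E" and "distinct (x # xs)"
    and "successively E (x # xs @ [x])" and "non_backtracking (x # xs @ [x])"
  shows "simple_cycle E (x # xs)"
proof -
  have "xs \<noteq> []" using assms(1,3) by (auto simp: simple_graph_def)
  moreover have "xs \<noteq> [y]" for y
    using assms(4) by (auto simp: non_backtracking_def intro: exI[of _ 0])
  ultimately have "3 \<le> length (x # xs)" by (cases xs rule: remdups_adj.cases) auto
  then show ?thesis
    using assms(2,3) successively_append_iff[of E "x # xs" "[x]"] by (simp add: simple_cycle_def)
qed

lemma non_backtracking_not_distinct_simple_cycle:
  assumes "simple_graph V E"
  shows "\<not> distinct xs \<Longrightarrow> successively E xs \<Longrightarrow> non_backtracking xs \<Longrightarrow>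
    \<exists>cs. simple_cycle E cs \<and> set cs \<subseteq> set xs"
proof (induction "length xs" arbitrary: xs rule: less_induct)
  case less
  obtain p u s r where xs: "xs = p @ [u] @ s @ [u] @ r"
    using not_distinct_decomp[OF less.prems(1)] by blast
  then have closed: "successively E (u # s @ [u])" "non_backtracking (u # s @ [u])"
    using successively_infix[of E p "u # s @ [u]" r] less.prems(2)
      non_backtracking_infix[of p "u # s @ [u]" r] less.prems(3) by auto
  show ?case
  proof (cases "distinct (u # s)")
    case True
    then show ?thesis
      using non_backtracking_closed_walk_simple_cycle[OF assms True closed] xs by auto
  next
    case False
    have "successively E (u # s)" "non_backtracking (u # s)"
      using successively_infix[of E "[]" "u # s" "[u]"] closed(1)
        non_backtracking_infix[of "[]" "u # s" "[u]"] closed(2) by auto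
    moreover have "length (u # s) < length xs" using xs by simp
    ultimately show ?thesis using less.hyps False xs by fastforce
  qed
qed

lemma excursion_from_set:
  assumes "hd xs \<in> I" and "last xs \<in> I" and "\<not> set xs \<subseteq> I"
  obtains A a m b B where "xs = A @ [a] @ m @ [b] @ B" "a \<in> I" "b \<in> I" "m \<noteq> []"
    "set m \<inter> I = {}"
proof -
  obtain P v R where xs: "xs = P @ v # R" "v \<notin> I" "set P \<subseteq> I"
    using split_list_first_prop[of xs "\<lambda>x. x \<notin> I"] assms(3) by blast
  have "P \<noteq> []" using assms(1) xs by auto
  have "R \<noteq> []" using assms(2) xs by auto
  then have "\<exists>x\<in>set R. x \<in> I" using assms(2) xs by auto
  then obtain m b B where R: "R = m @ b # B" "b \<in> I" "\<forall>x\<in>set m. x \<notin> I"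
    using split_list_first_prop[of R "\<lambda>x. x \<in> I"] by blast
  show thesis
  proof (rule that[of "butlast P" "last P" "v # m" b B])
    show "xs = butlast P @ [last P] @ (v # m) @ [b] @ B" using xs R \<open>P \<noteq> []\<close> by simp
  qed (use xs R \<open>P \<noteq> []\<close> in auto)
qed

lemma is_path_imp_distinct_path:
  "is_path S E p \<Longrightarrow> \<exists>p'. is_path S E p' \<and> distinct p' \<and> hd p' = hd p \<and> last p' = last p"
proof (induction "length p" arbitrary: p rule: less_induct)
  case less
  show ?case
  proof (cases "distinct p")
    case False
    then obtain A y B C where p: "p = A @ [y] @ B @ [y] @ C"
      using not_distinct_decomp by blast
    let ?q = "A @ [y] @ C"
    have "successively E (A @ [y])" "successively E (y # C)"
      using less.prems p successively_append_iff[of E "A @ [y]" "B @ y # C"]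
        successively_append_iff[of E B "y # C"] by (auto simp: is_path_iff_successively)
    then have "is_path S E ?q"
      using less.prems p by (auto simp: is_path_iff_successively successively_append_iff)
    moreover have "length ?q < length p" "hd ?q = hd p" "last ?q = last p"
      using p by (simp_all add: hd_append)
    ultimately show ?thesis using less.hyps by metis
  qed (use less.prems in blast)
qed

lemma connected_on_simple_path:
  assumes "connected_on E S" and "x \<in> S" and "y \<in> S"
  obtains p where "is_path S E p" "distinct p" "hd p = x" "last p = y"
  using assms is_path_imp_distinct_path unfolding connected_on_def by metis

lemma excursion_simple_cycle:
  assumes "simple_graph V E" and "connected_on E I" and "I \<subseteq> V"
    and "a \<in> I" and "b \<in> I" and "m \<noteq> []" and "set m \<inter> I = {}" and "set m \<subseteq> V"
    and walk: "successively E (a # m @ [b])" and "non_backtracking (a # m @ [b])"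
  shows "\<exists>cs. simple_cycle E cs \<and> set cs \<subseteq> V \<and> set cs \<inter> set m \<noteq> {}"
proof (cases "distinct (a # m @ [b])")
  case False
  then obtain cs where cs: "simple_cycle E cs" "set cs \<subseteq> set (a # m @ [b])"
    using non_backtracking_not_distinct_simple_cycle[OF assms(1)] assms(9,10) by blast
  have "3 \<le> card (set cs)" using cs(1) by (simp add: simple_cycle_def distinct_card)
  moreover have "card {a, b} \<le> 2" by (cases "a = b") auto
  ultimately have "\<not> set cs \<subseteq> {a, b}" using card_mono[of "{a, b}" "set cs"] by auto
  then have "set cs \<inter> set m \<noteq> {}" using cs(2) by auto
  moreover have "set cs \<subseteq> V" using cs(2) assms(3-5,8) by auto
  ultimately show ?thesis using cs(1) by blast
next
  case True
  then have "a \<noteq> b" by simp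
  obtain p where p: "is_path I E p" "distinct p" "hd p = a" "last p = b"
    using connected_on_simple_path[OF assms(2,4,5)] .
  have sym: "\<And>x y. E x y \<Longrightarrow> E y x" using assms(1) by (auto simp: simple_graph_def)
  have "successively E p" "set p \<subseteq> I" "p \<noteq> []"
    using p(1) by (simp_all add: is_path_iff_successively)
  have "length p \<ge> 2" using p(3,4) \<open>a \<noteq> b\<close> \<open>p \<noteq> []\<close>
    by (cases p rule: remdups_adj.cases) auto
  then have "3 \<le> length (m @ rev p)" using assms(6) by (cases m) auto
  moreover have "successively (\<lambda>x y. E y x) p"
    using \<open>successively E p\<close> by (rule successively_mono) (rule sym)
  then have "successively E (rev p)" by simp
  moreover have "hd (rev p) = b" "last (rev p) = a"
    using p(3,4) \<open>p \<noteq> []\<close> by (simp_all add: hd_rev last_rev)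
  moreover have "successively E m" "E (last m) b" "E a (hd m)"
    using walk assms(6) by (auto simp: successively_append_iff successively_Cons)
  ultimately have "simple_cycle E (m @ rev p)"
    using True assms(6,7) p(2) \<open>set p \<subseteq> I\<close> \<open>p \<noteq> []\<close>
    by (auto simp: simple_cycle_def successively_append_iff)
  moreover have "set (m @ rev p) \<subseteq> V" using \<open>set p \<subseteq> I\<close> assms(3,8) by auto
  moreover have "set (m @ rev p) \<inter> set m \<noteq> {}" using assms(6) by auto
  ultimately show ?thesis by blast
qed

theorem corollary2p3:
  fixes V :: "'a set" and E :: "'a \<Rightarrow> 'a \<Rightarrow> bool" and I :: "'a set"
  assumes "simple_graph V E"
    and "connected_on E V"
    and "pre_cycle_core V E I"
    and "y \<in> I" and "z \<in> I"
    and "is_path V E xs" and "non_backtracking xs"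
    and "hd xs = y" and "last xs = z"
  shows "is_path I E xs"
proof (rule ccontr)
  assume "\<not> is_path I E xs"
  then have "\<not> set xs \<subseteq> I" using assms(6) by (auto simp: is_path_iff_successively)
  then obtain A a m b B where "xs = A @ [a] @ m @ [b] @ B"
    and "a \<in> I" "b \<in> I" "m \<noteq> []" and m_out: "set m \<inter> I = {}"
    using excursion_from_set assms(4,5,8,9) by blast
  then have "xs = A @ (a # m @ [b]) @ B" by simp
  then have walk: "successively E (A @ (a # m @ [b]) @ B)" "non_backtracking (A @ (a # m @ [b]) @ B)"
    and "set m \<subseteq> V"
    using assms(6,7) by (auto simp: is_path_iff_successively)
  have "I \<subseteq> V" "connected_on E I" using assms(3) by (auto simp: pre_cycle_core_def)
  then obtain cs where "simple_cycle E cs" "set cs \<subseteq> V" "set cs \<inter> set m \<noteq> {}"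
    using excursion_simple_cycle[OF assms(1) _ _ \<open>a \<in> I\<close> \<open>b \<in> I\<close> \<open>m \<noteq> []\<close> m_out
        \<open>set m \<subseteq> V\<close> successively_infix[OF walk(1)] non_backtracking_infix[OF walk(2)]]
    by blast
  then show False
    using pre_cycle_core_contains_simple_cycles[OF assms(1,3)] m_out by blast
qed

end
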